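(* Let $\theta_1\in[0,2\pi)$, $d\in\mathbb{Z}_+$, $k\in\mathbb{Z}_+$, and let $\alpha=(\alpha_n)_{n\ge0}\in\mathbb{D}^\infty$ satisfy $(S-e^{-i\theta_1})^d\alpha\in\ell^2$ and $\alpha\in\ell^{2d+2}$. If $F\in A_{2k}$ satisfies $L_{2k}(F)\ge 2(d+1)-2k$, then $$\sup_{N}\Big|\sum_{n=0}^N[\phi_{2k}(F)]_n\Big|<\infty .$$
   Context: $\mathbb{D}$ is the open unit disk, $(S\alpha)_n:=\alpha_{n+1}$ is the shift. $A_{2k}:=\mathbb{C}[x_1,y_1,\dots,x_k,y_k]$; $\phi_{2k}$ is the linear map from $A_{2k}$ to complex sequences defined on monomials by $[\phi_{2k}(\prod_{i=1}^k x_i^{\beta_i}y_i^{\gamma_i})]_n=\prod_{i=1}^k\alpha_{n+\beta_i}\overline{\alpha_{n+\gamma_i}}$. The degree function $L_{2k}:A_{2k}\setminus\{0\}\to\mathbb{N}$ is defined as follows: expand $F$ uniquely as $F=\sum_{s=1}^M C_s\prod_{p=1}^k(x_p-e^{-i\theta_1})^{\beta_{p,s}}(y_p-e^{i\theta_1})^{\gamma_{p,s}}$ with $C_s\ne0$, $\beta_{p,s},\gamma_{p,s}\in\mathbb{N}$, and the exponent tuples $(\beta_{p,s},\gamma_{p,s})_{1\le p\le k}$ distinct for distinct $s$ (Taylor expansion at the point $x_p=e^{-i\theta_1}$, $y_p=e^{i\theta_1}$); then $L_{2k}(F):=\min_{1\le s\le M}\sum_{p=1}^k\big(\min(\beta_{p,s},d)+\min(\gamma_{p,s},d)\big)$.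 *)

theory Defs
  imports "HOL-Analysis.Analysis"
begin

text \<open>Polynomials in A_{2k} = C[x_1,y_1,...,x_k,y_k] are represented by their coefficient
  function in the monomial basis: a monomial prod_p x_p^(b_p) y_p^(g_p) is indexed by the pair
  of exponent lists (b, g), both of length k (list position p-1 corresponds to variable index p).\<close>

definition poly_supp :: "(nat list \<times> nat list \<Rightarrow> complex) \<Rightarrow> (nat list \<times> nat list) set" where
  "poly_supp C = {m. C m \<noteq> 0}"

definition is_poly2k :: "nat \<Rightarrow> (nat list \<times> nat list \<Rightarrow> complex) \<Rightarrow> bool" where
  "is_poly2k k C \<longleftrightarrow> finite (poly_supp C) \<and>
     (\<forall>b g. C (b, g) \<noteq> 0 \<longrightarrow> length b = k \<and> length g = k)"

definition phi2k :: "nat \<Rightarrow> (nat \<Rightarrow> complex) \<Rightarrow> (nat list \<times> nat list \<Rightarrow> complex) \<Rightarrow> nat \<Rightarrow> complex" where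
  "phi2k k \<alpha> C n = (\<Sum>m\<in>poly_supp C. C m *
      (\<Prod>p<k. \<alpha> (n + fst m ! p) * cnj (\<alpha> (n + snd m ! p))))"

text \<open>Coefficients of the Taylor expansion of F at x_p = e^{-i theta}, y_p = e^{i theta},
  written out via the binomial theorem x^b = sum_{b'} (b choose b') (x - c)^{b'} c^{b-b'}.\<close>
definition taylor_coeff :: "real \<Rightarrow> nat \<Rightarrow> (nat list \<times> nat list \<Rightarrow> complex) \<Rightarrow> nat list \<times> nat list \<Rightarrow> complex" where
  "taylor_coeff \<theta> k C bg = (\<Sum>m\<in>poly_supp C. C m *
      (\<Prod>p<k. (of_nat (fst m ! p choose fst bg ! p) * exp (- \<i> * \<theta>) ^ (fst m ! p - fst bg ! p))
             * (of_nat (snd m ! p choose snd bg ! p) * exp (\<i> * \<theta>) ^ (snd m ! p - snd bg ! p))))"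

definition L2k :: "real \<Rightarrow> nat \<Rightarrow> nat \<Rightarrow> (nat list \<times> nat list \<Rightarrow> complex) \<Rightarrow> nat" where
  "L2k \<theta> d k C = Min {(\<Sum>p<k. min (b ! p) d + min (g ! p) d) | b g.
       length b = k \<and> length g = k \<and> taylor_coeff \<theta> k C (b, g) \<noteq> 0}"

definition shift :: "(nat \<Rightarrow> complex) \<Rightarrow> nat \<Rightarrow> complex" where
  "shift \<alpha> n = \<alpha> (Suc n)"

definition shift_minus_pow :: "complex \<Rightarrow> nat \<Rightarrow> (nat \<Rightarrow> complex) \<Rightarrow> nat \<Rightarrow> complex" where
  "shift_minus_pow c d = ((\<lambda>\<beta> n. shift \<beta> n - c * \<beta> n) ^^ d)"

definition in_lp :: "nat \<Rightarrow> (nat \<Rightarrow> complex) \<Rightarrow> bool" where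
  "in_lp p \<alpha> \<longleftrightarrow> summable (\<lambda>n. norm (\<alpha> n) ^ p)"

end

theory Submission
  imports Defs
begin

text \<open>
  Write \<open>\<Delta> = S - c\<close> with \<open>c = e^(-i\<theta>\<^sub>1)\<close>. Expanding each factor \<open>\<alpha>(n + \<beta>)\<close> of
  \<open>\<phi>\<^sub>2\<^sub>k(F)\<close> by the binomial theorem for \<open>S = c + \<Delta>\<close> writes \<open>\<phi>\<^sub>2\<^sub>k(F)\<close> as a finite
  combination, with the Taylor coefficients of \<open>F\<close> at \<open>(e^(-i\<theta>\<^sub>1), e^(i\<theta>\<^sub>1))\<close>, of products
  \<open>\<Prod>\<^sub>p \<Delta>^b\<^sub>p \<alpha> \<cdot> conj (\<Delta>^g\<^sub>p \<alpha>)\<close>.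

  A discrete Gagliardo-Nirenberg inequality interpolates between \<open>\<alpha> \<in> \<ell>^(2d+2)\<close> and
  \<open>\<Delta>\<^sup>d\<alpha> \<in> \<ell>\<^sup>2\<close>: \<open>\<Delta>\<^sup>j\<alpha> \<in> \<ell>^((2d+2)/(j+1))\<close> for \<open>j \<le> d\<close>. It comes from summing
  \<open>\<Delta>\<^sup>j\<alpha>\<close> by parts against its duality map, Hoelder's inequality, and the resulting
  log-convexity in \<open>j\<close> of the (truncated) norms. The degree condition on \<open>F\<close> says
  precisely that in every product with a nonzero Taylor coefficient the reciprocal exponents
  add up to at least 1, so by Hoelder again each product, and hence \<open>\<phi>\<^sub>2\<^sub>k(F)\<close>, is
  absolutely summable.
\<close>

section \<open>The difference operator \<open>S - c\<close>\<close>

definition diff_op :: "'a::comm_ring \<Rightarrow> (nat \<Rightarrow> 'a) \<Rightarrow> nat \<Rightarrow> 'a" where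
  "diff_op c u n = u (Suc n) - c * u n"

lemma shift_minus_pow_eq_diff_op_pow: "shift_minus_pow c d = diff_op c ^^ d"
proof -
  have "(\<lambda>\<beta> n. shift \<beta> n - c * \<beta> n) = diff_op c"
    by (auto simp: fun_eq_iff shift_def diff_op_def)
  then show ?thesis unfolding shift_minus_pow_def by simp
qed

lemma diff_op_pow_linear:
  "(diff_op c ^^ j) (\<lambda>n. u n + a * v n) = (\<lambda>n. (diff_op c ^^ j) u n + a * (diff_op c ^^ j) v n)"
proof (induction j)
  case 0 then show ?case by simp
next
  case (Suc j)
  have "(diff_op c ^^ Suc j) (\<lambda>n. u n + a * v n)
      = diff_op c (\<lambda>n. (diff_op c ^^ j) u n + a * (diff_op c ^^ j) v n)"
    by (simp only: funpow.simps comp_def Suc)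
  also have "\<dots> = (\<lambda>n. diff_op c ((diff_op c ^^ j) u) n + a * diff_op c ((diff_op c ^^ j) v) n)"
    by (rule ext) (simp only: diff_op_def algebra_simps)
  finally show ?case by simp
qed

lemma diff_op_pow_Suc_right: "(diff_op c ^^ Suc j) u = (diff_op c ^^ j) (diff_op c u)"
  by (simp add: funpow_Suc_right del: funpow.simps)

lemma diff_op_pow_cong:
  "(\<And>i. i \<le> j \<Longrightarrow> u (n + i) = v (n + i)) \<Longrightarrow> (diff_op c ^^ j) u n = (diff_op c ^^ j) v n"
proof (induction j arbitrary: u v)
  case 0 then show ?case using "0.prems"[of 0] by simp
next
  case (Suc j)
  have "(diff_op c ^^ j) (diff_op c u) n = (diff_op c ^^ j) (diff_op c v) n"
  proof (rule Suc.IH)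
    fix i assume "i \<le> j"
    then show "diff_op c u (n + i) = diff_op c v (n + i)"
      using Suc.prems[of i] Suc.prems[of "Suc i"] by (simp add: diff_op_def)
  qed
  then show ?case by (simp only: diff_op_pow_Suc_right)
qed

lemma diff_op_pow_eq_0_beyond:
  "(\<And>n. n \<ge> N \<Longrightarrow> u n = 0) \<Longrightarrow> n \<ge> N \<Longrightarrow> (diff_op c ^^ j) u n = 0"
  by (induction j arbitrary: n) (auto simp: diff_op_def)

lemma pascal_binomial_sum:
  fixes x :: "nat \<Rightarrow> 'a::comm_ring_1"
  shows "(\<Sum>b\<le>m. of_nat (m choose b) * c^(m-b) * (x (Suc b) + c * x b))
       = (\<Sum>b\<le>Suc m. of_nat (Suc m choose b) * c^(Suc m-b) * x b)"
proof -
  have A: "(\<Sum>b\<le>m. of_nat (m choose b) * c^(m-b) * (c * x b))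
      = c^(Suc m) * x 0 + (\<Sum>i\<le>m. of_nat (m choose Suc i) * c^(m - i) * x (Suc i))"
  proof -
    have "(\<Sum>b\<le>m. of_nat (m choose b) * c^(m-b) * (c * x b))
        = (\<Sum>b\<le>Suc m. of_nat (m choose b) * c^(Suc m-b) * x b)"
      by (simp add: Suc_diff_le binomial_eq_0 mult_ac)
    also have "\<dots> = of_nat (m choose 0) * c^(Suc m - 0) * x 0
        + (\<Sum>i\<le>m. of_nat (m choose Suc i) * c^(Suc m - Suc i) * x (Suc i))"
      by (rule sum.atMost_Suc_shift)
    finally show ?thesis by simp
  qed
  have "(\<Sum>b\<le>Suc m. of_nat (Suc m choose b) * c^(Suc m-b) * x b)
     = of_nat (Suc m choose 0) * c^(Suc m - 0) * x 0
       + (\<Sum>i\<le>m. of_nat (Suc m choose Suc i) * c^(Suc m - Suc i) * x (Suc i))"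
    by (rule sum.atMost_Suc_shift)
  also have "\<dots> = c^(Suc m) * x 0 + (\<Sum>i\<le>m. of_nat (m choose i) * c^(m-i) * x (Suc i))
        + (\<Sum>i\<le>m. of_nat (m choose Suc i) * c^(m-i) * x (Suc i))"
    by (simp add: sum.distrib algebra_simps)
  finally show ?thesis using A by (simp add: distrib_left sum.distrib)
qed

text \<open>Discrete Taylor formula: the shift is \<open>c + (S - c)\<close>, expanded binomially.\<close>

lemma shift_binomial_expansion:
  fixes c :: "'a::comm_ring_1"
  shows "u (n + m) = (\<Sum>b\<le>m. of_nat (m choose b) * c^(m-b) * (diff_op c ^^ b) u n)"
proof (induction m arbitrary: u)
  case 0 then show ?case by simp
next
  case (Suc m)
  have "(\<lambda>i. u (Suc i)) = (\<lambda>i. diff_op c u i + c * u i)" by (simp add: diff_op_def fun_eq_iff)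
  then have D: "(diff_op c ^^ b) (\<lambda>i. u (Suc i)) n = (diff_op c ^^ Suc b) u n + c * (diff_op c ^^ b) u n" for b
    by (simp only: diff_op_pow_linear diff_op_pow_Suc_right)
  have "u (n + Suc m) = (\<Sum>b\<le>m. of_nat (m choose b) * c^(m-b) * (diff_op c ^^ b) (\<lambda>i. u (Suc i)) n)"
    using Suc.IH[of "\<lambda>i. u (Suc i)"] by simp
  also have "\<dots> = (\<Sum>b\<le>Suc m. of_nat (Suc m choose b) * c^(Suc m-b) * (diff_op c ^^ b) u n)"
    unfolding D by (rule pascal_binomial_sum[where x = "\<lambda>b. (diff_op c ^^ b) u n"])
  finally show ?case .
qed

lemma shift_binomial_expansion_atMost:
  fixes c :: "'a::comm_ring_1"
  assumes "m \<le> M"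
  shows "u (n + m) = (\<Sum>b\<le>M. of_nat (m choose b) * c^(m-b) * (diff_op c ^^ b) u n)"
proof -
  have "(\<Sum>b\<le>M. of_nat (m choose b) * c^(m-b) * (diff_op c ^^ b) u n)
      = (\<Sum>b\<le>m. of_nat (m choose b) * c^(m-b) * (diff_op c ^^ b) u n)"
    using assms by (intro sum.mono_neutral_right) (auto simp: binomial_eq_0)
  then show ?thesis using shift_binomial_expansion[of u n m c] by simp
qed

lemma norm_diff_op_pow_le:
  fixes c :: "'a::real_normed_field"
  assumes "norm c = 1" "\<And>n. norm (u n) \<le> 1"
  shows "norm ((diff_op c ^^ j) u n) \<le> 2^j"
proof (induction j arbitrary: n)
  case 0 then show ?case using assms by simp
next
  case (Suc j)
  have "norm ((diff_op c ^^ Suc j) u n) = norm ((diff_op c ^^ j) u (Suc n) - c * (diff_op c ^^ j) u n)"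
    by (simp add: diff_op_def)
  also have "\<dots> \<le> norm ((diff_op c ^^ j) u (Suc n)) + norm (c * (diff_op c ^^ j) u n)"
    by (rule norm_triangle_ineq4)
  also have "\<dots> \<le> 2^j + 2^j" using Suc.IH[of "Suc n"] Suc.IH[of n] assms(1) by (simp add: norm_mult)
  finally show ?case by simp
qed

lemma summable_norm_sq_diff_op:
  fixes c :: "'a::real_normed_field"
  assumes "summable (\<lambda>n. norm (u n) ^ 2)"
  shows "summable (\<lambda>n. norm (diff_op c u n) ^ 2)"
proof (rule summable_comparison_test'[where N = 0])
  have "summable (\<lambda>n. norm (u (Suc n)) ^ 2)"
    using assms by (subst summable_Suc_iff)
  then show "summable (\<lambda>n. 2 * norm (u (Suc n)) ^ 2 + 2 * (norm c * norm (u n)) ^ 2)"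
    using assms by (intro summable_add summable_mult) (simp_all add: power_mult_distrib)
  fix n
  have "norm (diff_op c u n) \<le> norm (u (Suc n)) + norm c * norm (u n)"
    unfolding diff_op_def using norm_triangle_ineq4[of "u (Suc n)" "c * u n"] by (simp add: norm_mult)
  then have "norm (diff_op c u n) ^ 2 \<le> (norm (u (Suc n)) + norm c * norm (u n)) ^ 2"
    by (intro power_mono) auto
  also have "\<dots> \<le> 2 * norm (u (Suc n)) ^ 2 + 2 * (norm c * norm (u n)) ^ 2"
    by (simp add: power2_sum) (smt (verit) sum_squares_bound)
  finally show "norm (norm (diff_op c u n) ^ 2) \<le> 2 * norm (u (Suc n)) ^ 2 + 2 * (norm c * norm (u n)) ^ 2"
    by simp
qed

lemma summable_norm_sq_diff_op_pow:
  fixes c :: "'a::real_normed_field"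
  assumes "summable (\<lambda>n. norm (u n) ^ 2)"
  shows "summable (\<lambda>n. norm ((diff_op c ^^ j) u n) ^ 2)"
  by (induction j) (simp_all add: assms summable_norm_sq_diff_op)


section \<open>Taylor expansion of \<open>phi2k\<close>\<close>

definition bounded_lists :: "nat \<Rightarrow> nat \<Rightarrow> nat list set" where
  "bounded_lists M k = {xs. set xs \<subseteq> {..M} \<and> length xs = k}"

lemma bounded_lists_Suc: "bounded_lists M (Suc k) = (\<lambda>(b, bs). b # bs) ` ({..M} \<times> bounded_lists M k)"
  by (auto simp: bounded_lists_def length_Suc_conv image_iff)

lemma prod_sum_eq_sum_bounded_lists:
  fixes f :: "nat \<Rightarrow> nat \<Rightarrow> 'a::comm_semiring_1"
  shows "(\<Prod>p<k. \<Sum>b\<le>M. f p b) = (\<Sum>bs\<in>bounded_lists M k. \<Prod>p<k. f p (bs ! p))"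
proof (induction k arbitrary: f)
  case 0
  have "bounded_lists M 0 = {[]}" unfolding bounded_lists_def by auto
  then show ?case by simp
next
  case (Suc k)
  have inj: "inj_on (\<lambda>(b, bs). b # bs) ({..M} \<times> bounded_lists M k)" by (auto simp: inj_on_def)
  have "(\<Prod>p<Suc k. \<Sum>b\<le>M. f p b) = (\<Sum>b\<le>M. f 0 b) * (\<Prod>p<k. \<Sum>b\<le>M. f (Suc p) b)"
    by (rule prod.lessThan_Suc_shift)
  also have "\<dots> = (\<Sum>(b, bs)\<in>{..M} \<times> bounded_lists M k. f 0 b * (\<Prod>p<k. f (Suc p) (bs ! p)))"
    using Suc.IH[of "\<lambda>p. f (Suc p)"] by (simp add: sum_product sum.cartesian_product)
  also have "\<dots> = (\<Sum>(b, bs)\<in>{..M} \<times> bounded_lists M k. \<Prod>p<Suc k. f p ((b # bs) ! p))"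
    by (intro sum.cong refl) (auto simp del: prod.lessThan_Suc simp add: prod.lessThan_Suc_shift)
  also have "\<dots> = (\<Sum>xs\<in>bounded_lists M (Suc k). \<Prod>p<Suc k. f p (xs ! p))"
    unfolding bounded_lists_Suc using sum.reindex[OF inj, of "\<lambda>xs. \<Prod>p<Suc k. f p (xs ! p)"]
    by (simp add: case_prod_beta comp_def del: prod.lessThan_Suc)
  finally show ?case .
qed

lemma prod_shift_cnj_eq_sum_bounded_lists:
  fixes \<alpha> :: "nat \<Rightarrow> complex"
  assumes M: "\<forall>p<k. bs ! p \<le> M \<and> gs ! p \<le> M"
  shows "(\<Prod>p<k. \<alpha> (n + bs ! p) * cnj (\<alpha> (n + gs ! p)))
    = (\<Sum>bg\<in>bounded_lists M k \<times> bounded_lists M k.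
        (\<Prod>p<k. of_nat (bs ! p choose fst bg ! p) * c ^ (bs ! p - fst bg ! p)
                * (of_nat (gs ! p choose snd bg ! p) * cnj c ^ (gs ! p - snd bg ! p)))
      * (\<Prod>p<k. (diff_op c ^^ (fst bg ! p)) \<alpha> n * cnj ((diff_op c ^^ (snd bg ! p)) \<alpha> n)))"
proof -
  define Dv where "Dv b = (diff_op c ^^ b) \<alpha> n" for b
  define cA where "cA p b = of_nat (bs ! p choose b) * c ^ (bs ! p - b)" for p b
  define cB where "cB p g = of_nat (gs ! p choose g) * cnj c ^ (gs ! p - g)" for p g
  have "(\<Prod>p<k. \<alpha> (n + bs ! p) * cnj (\<alpha> (n + gs ! p)))
     = (\<Prod>p<k. (\<Sum>b\<le>M. cA p b * Dv b) * (\<Sum>g\<le>M. cB p g * cnj (Dv g)))"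
  proof (intro prod.cong refl)
    fix p assume "p \<in> {..<k}"
    then have le: "bs ! p \<le> M" "gs ! p \<le> M" using M by auto
    have "\<alpha> (n + gs ! p) = (\<Sum>g\<le>M. of_nat (gs ! p choose g) * c ^ (gs ! p - g) * Dv g)"
      unfolding Dv_def by (rule shift_binomial_expansion_atMost[OF le(2)])
    then have "cnj (\<alpha> (n + gs ! p)) = (\<Sum>g\<le>M. cB p g * cnj (Dv g))"
      unfolding cB_def by (simp add: cnj_sum)
    moreover have "\<alpha> (n + bs ! p) = (\<Sum>b\<le>M. cA p b * Dv b)"
      unfolding cA_def Dv_def by (rule shift_binomial_expansion_atMost[OF le(1)])
    ultimately show "\<alpha> (n + bs ! p) * cnj (\<alpha> (n + gs ! p))
        = (\<Sum>b\<le>M. cA p b * Dv b) * (\<Sum>g\<le>M. cB p g * cnj (Dv g))"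
      by simp
  qed
  also have "\<dots> = (\<Sum>b'\<in>bounded_lists M k. \<Prod>p<k. cA p (b' ! p) * Dv (b' ! p))
      * (\<Sum>g'\<in>bounded_lists M k. \<Prod>p<k. cB p (g' ! p) * cnj (Dv (g' ! p)))"
    by (simp only: prod.distrib prod_sum_eq_sum_bounded_lists)
  also have "\<dots> = (\<Sum>bg\<in>bounded_lists M k \<times> bounded_lists M k.
      (\<Prod>p<k. cA p (fst bg ! p) * cB p (snd bg ! p)) * (\<Prod>p<k. Dv (fst bg ! p) * cnj (Dv (snd bg ! p))))"
    by (simp add: sum_product sum.cartesian_product case_prod_beta prod.distrib[symmetric] ac_simps)
  finally show ?thesis by (simp add: cA_def cB_def Dv_def mult.assoc)
qed

text \<open>Expanding every factor of \<open>phi2k\<close> by the discrete Taylor formula turns the monomial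
  coefficients of \<open>F\<close> into its Taylor coefficients at \<open>x\<^sub>p = e^(-i\<theta>), y\<^sub>p = e^(i\<theta>)\<close>.\<close>

lemma phi2k_eq_taylor_sum:
  fixes \<theta> :: real and \<alpha> :: "nat \<Rightarrow> complex"
  defines "c \<equiv> exp (- \<i> * of_real \<theta>)"
  assumes M: "\<forall>m\<in>poly_supp C. \<forall>p<k. fst m ! p \<le> M \<and> snd m ! p \<le> M"
  shows "phi2k k \<alpha> C n = (\<Sum>bg\<in>bounded_lists M k \<times> bounded_lists M k. taylor_coeff \<theta> k C bg *
     (\<Prod>p<k. (diff_op c ^^ (fst bg ! p)) \<alpha> n * cnj ((diff_op c ^^ (snd bg ! p)) \<alpha> n)))"
proof -
  define T where "T = bounded_lists M k \<times> bounded_lists M k"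
  define w where "w m bg = (\<Prod>p<k. of_nat (fst m ! p choose fst bg ! p) * c ^ (fst m ! p - fst bg ! p)
      * (of_nat (snd m ! p choose snd bg ! p) * cnj c ^ (snd m ! p - snd bg ! p)))"
    for m bg :: "nat list \<times> nat list"
  define D where "D bg = (\<Prod>p<k. (diff_op c ^^ (fst bg ! p)) \<alpha> n * cnj ((diff_op c ^^ (snd bg ! p)) \<alpha> n))"
    for bg :: "nat list \<times> nat list"
  have coeff: "taylor_coeff \<theta> k C bg = (\<Sum>m\<in>poly_supp C. C m * w m bg)" for bg
    unfolding taylor_coeff_def w_def c_def by (simp add: exp_cnj)
  have "(\<Prod>p<k. \<alpha> (n + fst m ! p) * cnj (\<alpha> (n + snd m ! p))) = (\<Sum>bg\<in>T. w m bg * D bg)"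
    if "m \<in> poly_supp C" for m
    unfolding T_def w_def D_def using M that by (intro prod_shift_cnj_eq_sum_bounded_lists) auto
  then have "phi2k k \<alpha> C n = (\<Sum>m\<in>poly_supp C. \<Sum>bg\<in>T. C m * (w m bg * D bg))"
    unfolding phi2k_def by (simp add: sum_distrib_left)
  also have "\<dots> = (\<Sum>bg\<in>T. \<Sum>m\<in>poly_supp C. C m * (w m bg * D bg))" by (rule sum.swap)
  also have "\<dots> = (\<Sum>bg\<in>T. taylor_coeff \<theta> k C bg * D bg)"
    by (simp add: coeff sum_distrib_right mult.assoc)
  finally show ?thesis unfolding T_def D_def .
qed

section \<open>Elementary inequalities\<close>

lemma Youngs_inequality_3:
  fixes A B C w1 w2 w3 :: real
  assumes "A \<ge> 0" "B \<ge> 0" "C \<ge> 0" "w1 > 0" "w2 > 0" "w3 > 0" "w1 + w2 + w3 = 1"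
  shows "A powr w1 * B powr w2 * C powr w3 \<le> w1*A + w2*B + w3*C"
proof (cases "A = 0 \<or> B = 0 \<or> C = 0")
  case True
  then have z: "A powr w1 * B powr w2 * C powr w3 = 0" by auto
  have "0 \<le> w1*A + w2*B + w3*C" using assms by simp
  then show ?thesis by (simp only: z)
next
  case False
  hence pos: "A > 0" "B > 0" "C > 0" using assms by auto
  define s where "s = w1 + w2"
  have s: "s > 0" "s + w3 = 1" using assms by (auto simp: s_def)
  define X where "X = (w1/s)*A + (w2/s)*B"
  have X: "X > 0" using pos assms s by (auto simp: X_def intro!: add_pos_pos mult_pos_pos)
  have ws: "w1/s + w2/s = 1" using s by (simp add: s_def add_divide_distrib[symmetric])
  have y1: "A powr (w1/s) * B powr (w2/s) \<le> X"
    unfolding X_def using Youngs_inequality_0[of "w1/s" "w2/s" A B] pos assms s ws by simp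
  have "A powr w1 * B powr w2 = (A powr (w1/s) * B powr (w2/s)) powr s"
    using pos s by (simp add: powr_mult powr_powr)
  also have "\<dots> \<le> X powr s" by (rule powr_mono2) (use s pos y1 in auto)
  finally have "A powr w1 * B powr w2 \<le> X powr s" .
  hence "A powr w1 * B powr w2 * C powr w3 \<le> X powr s * C powr w3" by (rule mult_right_mono) simp
  also have "\<dots> \<le> s*X + w3*C" using Youngs_inequality_0[of s w3 X C] s X pos assms by simp
  also have "s * X = w1*A + w2*B" using s by (simp add: X_def field_simps)
  finally show ?thesis by simp
qed

lemma Holder_inequality_sum3:
  fixes x y z :: "'a \<Rightarrow> real"
  assumes fin: "finite I" and nonneg: "\<And>i. i\<in>I \<Longrightarrow> x i \<ge> 0 \<and> y i \<ge> 0 \<and> z i \<ge> 0"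
    and w: "w1 > 0" "w2 > 0" "w3 > 0" "w1 + w2 + w3 = 1"
  shows "(\<Sum>i\<in>I. x i * y i * z i) \<le> (\<Sum>i\<in>I. x i powr (1/w1)) powr w1
     * (\<Sum>i\<in>I. y i powr (1/w2)) powr w2 * (\<Sum>i\<in>I. z i powr (1/w3)) powr w3"
proof -
  define SX where "SX = (\<Sum>i\<in>I. x i powr (1/w1))"
  define SY where "SY = (\<Sum>i\<in>I. y i powr (1/w2))"
  define SZ where "SZ = (\<Sum>i\<in>I. z i powr (1/w3))"
  have S0: "SX \<ge> 0" "SY \<ge> 0" "SZ \<ge> 0" unfolding SX_def SY_def SZ_def by (auto intro: sum_nonneg)
  have R0: "0 \<le> SX powr w1 * SY powr w2 * SZ powr w3" by simp
  show ?thesis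
  proof (cases "SX = 0 \<or> SY = 0 \<or> SZ = 0")
    case True
    then have "x i * y i * z i = 0" if "i \<in> I" for i
      using that fin nonneg unfolding SX_def SY_def SZ_def by (auto simp: sum_nonneg_eq_0_iff)
    then have "(\<Sum>i\<in>I. x i * y i * z i) = 0" by (intro sum.neutral) auto
    then show ?thesis using R0 unfolding SX_def SY_def SZ_def by simp
  next
    case False
    then have P: "SX > 0" "SY > 0" "SZ > 0" using S0 by auto
    define K where "K = SX powr w1 * SY powr w2 * SZ powr w3"
    have inv: "(v powr (1/w) / S) powr w = v / S powr w" if "v \<ge> 0" "w > 0" for v w S :: real
      using that by (simp add: powr_divide powr_powr)
    have pt: "x i * y i * z i \<le> K * (w1 * (x i powr (1/w1) / SX) + w2 * (y i powr (1/w2) / SY) + w3 * (z i powr (1/w3) / SZ))"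
      if i: "i \<in> I" for i
    proof -
      have "x i * y i * z i = K * ((x i powr (1/w1) / SX) powr w1 * (y i powr (1/w2) / SY) powr w2 * (z i powr (1/w3) / SZ) powr w3)"
        using nonneg[OF i] w P by (simp add: inv K_def field_simps)
      also have "\<dots> \<le> K * (w1 * (x i powr (1/w1) / SX) + w2 * (y i powr (1/w2) / SY) + w3 * (z i powr (1/w3) / SZ))"
        by (intro mult_left_mono Youngs_inequality_3) (use w P in \<open>auto simp: K_def\<close>)
      finally show ?thesis .
    qed
    have "(\<Sum>i\<in>I. x i * y i * z i) \<le> (\<Sum>i\<in>I. K * (w1 * (x i powr (1/w1) / SX) + w2 * (y i powr (1/w2) / SY) + w3 * (z i powr (1/w3) / SZ)))"
      by (rule sum_mono) (rule pt)
    also have "\<dots> = K * (w1 * (\<Sum>i\<in>I. x i powr (1/w1) / SX) + w2 * (\<Sum>i\<in>I. y i powr (1/w2) / SY) + w3 * (\<Sum>i\<in>I. z i powr (1/w3) / SZ))"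
      by (simp only: sum_distrib_left[symmetric] sum.distrib)
    also have "(\<Sum>i\<in>I. x i powr (1/w1) / SX) = 1"
      unfolding sum_divide_distrib[symmetric] SX_def[symmetric] using P by simp
    also have "(\<Sum>i\<in>I. y i powr (1/w2) / SY) = 1"
      unfolding sum_divide_distrib[symmetric] SY_def[symmetric] using P by simp
    also have "(\<Sum>i\<in>I. z i powr (1/w3) / SZ) = 1"
      unfolding sum_divide_distrib[symmetric] SZ_def[symmetric] using P by simp
    also have "K * (w1 * 1 + w2 * 1 + w3 * 1) = K" using w by simp
    finally show ?thesis unfolding K_def SX_def SY_def SZ_def .
  qed
qed

lemma mult_powr_diff_le:
  fixes x y q :: real
  assumes "0 \<le> x" "x \<le> y" "q > 0"
  shows "x * (y powr q - x powr q) \<le> q * (y - x) * y powr q"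
proof (cases "x = 0 \<or> x = y")
  case False
  then have xy: "0 < x" "x < y" using assms by auto
  have der: "((\<lambda>t. t powr q) has_real_derivative q * t powr (q - 1)) (at t)" if "x \<le> t" for t
    using xy that by (intro has_real_derivative_powr) auto
  obtain z where z: "x < z" "z < y" "y powr q - x powr q = (y - x) * (q * z powr (q - 1))"
    using MVT2[OF xy(2) der] by blast
  have "x * z powr (q - 1) \<le> z * z powr (q - 1)" using z by (intro mult_right_mono) auto
  also have "\<dots> = z powr q" using z xy powr_mult_base[of z "q - 1"] by simp
  also have "\<dots> \<le> y powr q" using z xy assms by (intro powr_mono2) auto
  finally have "q * (y - x) * (x * z powr (q - 1)) \<le> q * (y - x) * y powr q"
    using xy assms by (intro mult_left_mono) auto
  then show ?thesis unfolding z(3) by (simp add: algebra_simps)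
qed (use assms in auto)

lemma mult_abs_powr_diff_le:
  fixes a b q :: real
  assumes "a \<ge> 0" "b \<ge> 0" "q > 0"
  shows "b * \<bar>a powr q - b powr q\<bar> \<le> (1 + q) * \<bar>a - b\<bar> * (a powr q + b powr q)"
proof (cases "b \<le> a")
  case True
  then have "b * \<bar>a powr q - b powr q\<bar> = b * (a powr q - b powr q)"
    using assms by (simp add: powr_mono2)
  also have "\<dots> \<le> q * (a - b) * a powr q" using True assms by (intro mult_powr_diff_le) auto
  also have "\<dots> \<le> (1 + q) * \<bar>a - b\<bar> * (a powr q + b powr q)"
    using True assms by (intro mult_mono) auto
  finally show ?thesis .
next
  case False
  then have "b * \<bar>a powr q - b powr q\<bar> = (b - a) * (b powr q - a powr q) + a * (b powr q - a powr q)"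
    using assms by (simp add: powr_mono2 algebra_simps)
  also have "\<dots> \<le> (b - a) * b powr q + q * (b - a) * b powr q"
  proof (rule add_mono)
    show "(b - a) * (b powr q - a powr q) \<le> (b - a) * b powr q"
      using False by (intro mult_left_mono) auto
    show "a * (b powr q - a powr q) \<le> q * (b - a) * b powr q"
      using False assms by (intro mult_powr_diff_le) auto
  qed
  also have "\<dots> = (1 + q) * \<bar>a - b\<bar> * b powr q"
    using False by (simp add: algebra_simps)
  also have "\<dots> \<le> (1 + q) * \<bar>a - b\<bar> * (a powr q + b powr q)"
    using assms by (intro mult_left_mono) auto
  finally show ?thesis .
qed

lemma norm_cnj_mult_powr_diff_le:
  fixes z w :: complex and q :: real
  assumes q: "q > 0"
  shows "norm (cnj z * of_real (norm z powr q) - cnj w * of_real (norm w powr q))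
     \<le> (2 + q) * norm (z - w) * (norm z powr q + norm w powr q)"
proof -
  have split: "cnj z * of_real (norm z powr q) - cnj w * of_real (norm w powr q)
     = cnj (z - w) * of_real (norm z powr q) + cnj w * of_real (norm z powr q - norm w powr q)"
    by (simp add: algebra_simps)
  have "norm (cnj z * of_real (norm z powr q) - cnj w * of_real (norm w powr q))
      \<le> norm (z - w) * norm z powr q + norm w * \<bar>norm z powr q - norm w powr q\<bar>"
    unfolding split by (rule order_trans[OF norm_triangle_ineq])
      (simp only: norm_mult complex_mod_cnj norm_of_real, simp)
  also have "norm w * \<bar>norm z powr q - norm w powr q\<bar>
      \<le> (1 + q) * \<bar>norm z - norm w\<bar> * (norm z powr q + norm w powr q)"
    using q by (intro mult_abs_powr_diff_le) auto
  also have "\<dots> \<le> (1 + q) * norm (z - w) * (norm z powr q + norm w powr q)"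
    using q by (intro mult_right_mono mult_left_mono norm_triangle_ineq3) auto
  finally have "norm (cnj z * of_real (norm z powr q) - cnj w * of_real (norm w powr q))
      \<le> norm (z - w) * norm z powr q + (1 + q) * norm (z - w) * (norm z powr q + norm w powr q)"
    by simp
  moreover have "(2 + q) * norm (z - w) * (norm z powr q + norm w powr q) = norm (z - w) * norm z powr q
     + (1 + q) * norm (z - w) * (norm z powr q + norm w powr q) + norm (z - w) * norm w powr q"
    by (simp add: algebra_simps)
  moreover have "0 \<le> norm (z - w) * norm w powr q" by simp
  ultimately show ?thesis by linarith
qed

lemma sum_shift_le:
  fixes f :: "nat \<Rightarrow> real"
  assumes "\<And>n. f n \<ge> 0" "\<And>n. n \<ge> N \<Longrightarrow> f n = 0"
  shows "(\<Sum>n<N. f (n + s)) \<le> (\<Sum>n<N. f n)"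
proof -
  have "(\<Sum>n<N. f (n + s)) = (\<Sum>n\<in>{0 + s..<N + s}. f n)"
    using sum.shift_bounds_nat_ivl[of f 0 s N] by (simp add: atLeast0LessThan)
  also have "\<dots> \<le> (\<Sum>n<N + s. f n)" using assms(1) by (intro sum_mono2) auto
  also have "\<dots> = (\<Sum>n<N. f n)" using assms(2) by (intro sum.mono_neutral_right) auto
  finally show ?thesis .
qed

lemma Holder_inequality_sum3_shifted:
  fixes x y z :: "nat \<Rightarrow> real"
  assumes nonneg: "\<And>n. x n \<ge> 0" "\<And>n. y n \<ge> 0" "\<And>n. z n \<ge> 0"
    and vanish: "\<And>n. n \<ge> N \<Longrightarrow> x n = 0" "\<And>n. n \<ge> N \<Longrightarrow> z n = 0"
    and w: "w1 > 0" "w2 > 0" "w3 > 0" "w1 + w2 + w3 = 1"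
  shows "(\<Sum>n<N. x (n + s) * y n * z (n + t)) \<le> (\<Sum>n<N. x n powr (1/w1)) powr w1
     * (\<Sum>n<N. y n powr (1/w2)) powr w2 * (\<Sum>n<N. z n powr (1/w3)) powr w3"
proof -
  have shifted: "(\<Sum>n<N. f (n + i) powr (1/w)) powr w \<le> (\<Sum>n<N. f n powr (1/w)) powr w"
    if "\<And>n. n \<ge> N \<Longrightarrow> f n = 0" "w > 0" for f :: "nat \<Rightarrow> real" and i w
    using that by (intro powr_mono2 sum_shift_le[where f = "\<lambda>n. f n powr (1/w)"]) (auto intro: sum_nonneg)
  have "(\<Sum>n<N. x (n + s) * y n * z (n + t)) \<le> (\<Sum>n<N. x (n + s) powr (1/w1)) powr w1
     * (\<Sum>n<N. y n powr (1/w2)) powr w2 * (\<Sum>n<N. z (n + t) powr (1/w3)) powr w3"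
    using nonneg w by (intro Holder_inequality_sum3) auto
  also have "\<dots> \<le> (\<Sum>n<N. x n powr (1/w1)) powr w1
     * (\<Sum>n<N. y n powr (1/w2)) powr w2 * (\<Sum>n<N. z n powr (1/w3)) powr w3"
    using vanish w by (intro mult_mono shifted) auto
  finally show ?thesis .
qed

section \<open>A discrete Gagliardo-Nirenberg inequality\<close>

lemma sum_diff_op_mult_by_parts:
  "(\<Sum>n<N. diff_op c u n * G n)
   = (\<Sum>n<N. u (Suc n) * (G n - c * G (Suc n))) - c * u 0 * G 0 + c * u N * G N"
  by (induction N) (simp_all add: diff_op_def algebra_simps)

text \<open>The duality map \<open>z \<mapsto> conj z |z|^(p-2)\<close> of \<open>\<ell>^p\<close>, written with \<open>q = p - 2\<close>.\<close>

definition duality_map :: "real \<Rightarrow> complex \<Rightarrow> complex" where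
  "duality_map q z = cnj z * of_real (norm z powr q)"

lemma mult_duality_map: "z * duality_map q z = of_real (norm z powr (2 + q))"
proof (cases "z = 0")
  case False
  have "z * duality_map q z = of_real (norm z ^ 2 * norm z powr q)"
    unfolding duality_map_def mult.assoc[symmetric] complex_norm_square[symmetric] by simp
  also have "norm z ^ 2 * norm z powr q = norm z powr (2 + q)"
    using False by (simp add: powr_add)
  finally show ?thesis .
qed (simp add: duality_map_def)

lemma norm_duality_map: "norm (duality_map q z) = norm z powr (1 + q)"
  by (simp add: duality_map_def norm_mult powr_mult_base)

lemma norm_duality_map_diff_le:
  assumes c: "norm c = 1" and q: "q > 0"
  shows "norm (duality_map q (v n) - c * duality_map q (v (Suc n)))
     \<le> (2 + q) * norm (diff_op c v n) * (norm (v n) powr q + norm (v (Suc n)) powr q)"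
proof -
  define z where "z = cnj c * v (Suc n)"
  have c_cnj: "c * cnj c = 1" using c complex_norm_square[of c] by simp
  have nz: "norm z = norm (v (Suc n))" using c by (simp add: z_def norm_mult)
  have "c * duality_map q (v (Suc n)) = duality_map q z"
    using c by (simp add: duality_map_def z_def norm_mult mult.assoc)
  then have "norm (duality_map q (v n) - c * duality_map q (v (Suc n)))
      \<le> (2 + q) * norm (v n - z) * (norm (v n) powr q + norm z powr q)"
    using norm_cnj_mult_powr_diff_le[OF q, of "v n" z] by (simp add: duality_map_def)
  moreover have "norm (v n - z) = norm (diff_op c v n)"
  proof -
    have "c * (v n - z) = - diff_op c v n"
      unfolding z_def diff_op_def using c_cnj by (simp add: algebra_simps)
    then show ?thesis using c by (metis norm_minus_cancel norm_mult mult_1)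
  qed
  ultimately show ?thesis by (simp only: nz)
qed

lemma log_convex_le_max_endpoints:
  fixes R :: "nat \<Rightarrow> real"
  assumes pos: "\<And>j. j \<le> d \<Longrightarrow> R j > 0"
    and cv: "\<And>j. 0 < j \<Longrightarrow> j < d \<Longrightarrow> (R j)^2 \<le> R (j - 1) * R (j + 1)"
    and j: "j \<le> d"
  shows "R j \<le> max (R 0) (R d)"
proof -
  define M where "M = Max (R ` {..d})"
  have RM: "R i \<le> M" if "i \<le> d" for i unfolding M_def using that by (intro Max_ge) auto
  have "M \<in> R ` {..d}" unfolding M_def by (intro Max_in) auto
  then have "{i. i \<le> d \<and> R i = M} \<noteq> {}" by auto
  define i where "i = Max {i. i \<le> d \<and> R i = M}"
  have i: "i \<le> d" "R i = M"
    using Max_in[OF _ \<open>{i. i \<le> d \<and> R i = M} \<noteq> {}\<close>] unfolding i_def by auto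
  have "i = 0 \<or> i = d"
  proof (rule ccontr)
    assume "\<not> (i = 0 \<or> i = d)"
    then have ii: "0 < i" "i < d" using i by auto
    \<comment> \<open>\<open>i\<close> is the last maximiser, so \<open>R (i + 1) < M\<close>,
      contradicting \<open>M\<^sup>2 \<le> R (i - 1) R (i + 1)\<close>.\<close>
    have "i + 1 \<notin> {i. i \<le> d \<and> R i = M}" using Max_ge[of "{i. i \<le> d \<and> R i = M}" "i + 1"] i_def by fastforce
    then have lt: "R (i + 1) < M" using RM[of "i + 1"] ii by auto
    have "M^2 \<le> R (i - 1) * R (i + 1)" using cv[OF ii] i by simp
    also have "\<dots> \<le> M * R (i + 1)" using RM[of "i - 1"] pos[of "i + 1"] ii by (intro mult_right_mono) auto
    also have "\<dots> < M * M" using lt pos[of i] i by simp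
    finally show False by (simp add: power2_eq_square)
  qed
  then show ?thesis using RM[OF j] i by auto
qed

lemma quasi_log_convex_bound:
  fixes P :: "nat \<Rightarrow> real" and K B :: real
  assumes P: "\<And>i. P i \<ge> 1" and K: "K \<ge> 1"
    and step: "\<And>i. 0 < i \<Longrightarrow> i < d \<Longrightarrow> (P i)^2 \<le> K * P (i - 1) * P (i + 1)"
    and ends: "P 0 \<le> B" "P d \<le> B" and j: "j \<le> d"
  shows "P j \<le> B^2 * K^(d*d)"
proof -
  \<comment> \<open>The weight \<open>K^(i\<^sup>2)\<close> absorbs the factor \<open>K\<close>,
    since \<open>(i-1)\<^sup>2 + (i+1)\<^sup>2 = 2i\<^sup>2 + 2\<close>.\<close>
  define R where "R i = (P i)^2 * K^(i*i)" for i
  have R_pos: "R i > 0" for i unfolding R_def using P[of i] K by simp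
  have R_log_convex: "(R i)^2 \<le> R (i - 1) * R (i + 1)" if i: "0 < i" "i < d" for i
  proof -
    have "(i - 1) * (i - 1) + (i + 1) * (i + 1) = 2 + 2 * (i * i)" using i
      by (cases i) (auto simp: algebra_simps)
    then have "K^((i - 1) * (i - 1)) * K^((i + 1) * (i + 1)) = K^(2 + 2 * (i * i))"
      by (simp only: power_add[symmetric])
    then have K_pow: "K^((i - 1) * (i - 1)) * K^((i + 1) * (i + 1)) = K^2 * (K^(i*i))^2"
      by (metis power_add power_mult mult.commute)
    have "(R i)^2 = ((P i)^2)^2 * (K^(i*i))^2" unfolding R_def by (simp only: power_mult_distrib)
    also have "\<dots> \<le> (K * P (i - 1) * P (i + 1))^2 * (K^(i*i))^2"
      using step[OF i] P[of i] by (intro mult_right_mono power_mono) auto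
    also have "\<dots> = R (i - 1) * R (i + 1)"
      unfolding R_def by (simp only: K_pow power_mult_distrib mult_ac)
    finally show ?thesis .
  qed
  have R_ends: "R i \<le> B^2 * K^(d*d)" if "i = 0 \<or> i = d" for i
  proof -
    have "(P i)^2 \<le> B^2" using that ends P[of i] by (intro power_mono) auto
    moreover have "K^(i*i) \<le> K^(d*d)" using that K by (intro power_increasing) auto
    ultimately show ?thesis unfolding R_def using K by (intro mult_mono) auto
  qed
  have "P j \<le> (P j)^2" using P[of j] by (simp add: power2_eq_square)
  also have "\<dots> \<le> R j"
    unfolding R_def using K mult_left_mono[of 1 "K^(j*j)" "(P j)^2"] by (simp add: one_le_power)
  also have "\<dots> \<le> max (R 0) (R d)" using log_convex_le_max_endpoints[OF _ R_log_convex j] R_pos by auto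
  also have "\<dots> \<le> B^2 * K^(d*d)" using R_ends by auto
  finally show ?thesis .
qed

lemma max_one_sq_le_of_powr_le:
  fixes x y z p H L :: real
  assumes p: "p > 2" and nonneg: "x \<ge> 0" "y \<ge> 0" "z \<ge> 0" "H \<ge> 0" "L \<ge> 0" and HL: "H + L \<ge> 1"
    and ineq: "x powr p \<le> H + L * y * z * x powr (p - 2)"
  shows "(max 1 x)^2 \<le> (H + L) * max 1 y * max 1 z"
proof -
  have yz: "1 \<le> max 1 y * max 1 z" using mult_mono[of 1 "max 1 y" 1 "max 1 z"] by simp
  show ?thesis
  proof (cases "x \<le> 1")
    case True
    have "1 * 1 \<le> (H + L) * (max 1 y * max 1 z)" using HL yz by (intro mult_mono) auto
    then show ?thesis using True by (simp add: mult.assoc)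
  next
    case False
    define t where "t = x powr (p - 2)"
    have t: "t \<ge> 1" unfolding t_def using False p by (intro ge_one_powr_ge_zero) auto
    have "x powr p = x powr (2 + (p - 2))" by simp
    also have "\<dots> = x^2 * t" unfolding powr_add using False by (simp add: t_def)
    finally have "x^2 * t \<le> H + L * y * z * t" using ineq by (simp add: t_def)
    also have "\<dots> \<le> (H + L * y * z) * t"
      using mult_left_mono[OF t, of H] nonneg by (simp add: algebra_simps)
    finally have "x^2 * t \<le> (H + L * y * z) * t" .
    then have "x^2 \<le> H + L * (y * z)" using t by simp
    also have "\<dots> \<le> H * (max 1 y * max 1 z) + L * (max 1 y * max 1 z)"
    proof (rule add_mono)
      show "H \<le> H * (max 1 y * max 1 z)" using mult_left_mono[OF yz, of H] nonneg by simp
      show "L * (y * z) \<le> L * (max 1 y * max 1 z)" using nonneg by (intro mult_left_mono mult_mono) auto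
    qed
    finally show ?thesis using False by (simp add: algebra_simps)
  qed
qed

definition lp_norm_upto :: "nat \<Rightarrow> real \<Rightarrow> (nat \<Rightarrow> complex) \<Rightarrow> real" where
  "lp_norm_upto N q v = (\<Sum>n<N. norm (v n) powr q) powr (1/q)"

lemma lp_norm_upto_nonneg: "lp_norm_upto N q v \<ge> 0"
  by (simp add: lp_norm_upto_def)

lemma lp_norm_upto_powr: "q > 0 \<Longrightarrow> lp_norm_upto N q v powr q = (\<Sum>n<N. norm (v n) powr q)"
  by (simp add: lp_norm_upto_def powr_powr sum_nonneg)

text \<open>Testing \<open>\<Delta>u = (S - c)u\<close> against its duality map and summing by parts moves the
  difference onto the duality map, where it costs only a factor \<open>|\<Delta>\<^sup>2u|\<close>.\<close>

lemma sum_norm_diff_op_powr_le_by_parts: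
  fixes u :: "nat \<Rightarrow> complex" and c :: complex and p H :: real
  assumes c: "norm c = 1" and supp: "\<And>n. n \<ge> N \<Longrightarrow> u n = 0"
    and ub: "\<And>n. norm (u n) \<le> H" and vb: "\<And>n. norm (diff_op c u n) \<le> H" and p: "p > 2"
  shows "(\<Sum>n<N. norm (diff_op c u n) powr p) \<le> H powr p
     + p * ((\<Sum>n<N. norm (u (n + 1)) * norm (diff_op c (diff_op c u) n) * norm (diff_op c u (n + 0)) powr (p - 2))
          + (\<Sum>n<N. norm (u (n + 1)) * norm (diff_op c (diff_op c u) n) * norm (diff_op c u (n + 1)) powr (p - 2)))"
proof -
  define v where "v = diff_op c u"
  define q where "q = p - 2"
  have q: "q > 0" "2 + q = p" using p by (auto simp: q_def)
  define J where "J n = duality_map q (v n)" for n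
  have H: "H \<ge> 0" using ub[of 0] norm_ge_zero[of "u 0"] by linarith
  have "(\<Sum>n<N. norm (v n) powr p) = norm (complex_of_real (\<Sum>n<N. norm (v n) powr p))"
    by (simp only: norm_of_real abs_of_nonneg sum_nonneg powr_ge_zero)
  also have "complex_of_real (\<Sum>n<N. norm (v n) powr p) = (\<Sum>n<N. diff_op c u n * J n)"
    by (simp add: J_def v_def mult_duality_map q(2))
  also have "\<dots> = (\<Sum>n<N. u (Suc n) * (J n - c * J (Suc n))) - c * u 0 * J 0"
    using sum_diff_op_mult_by_parts[where N = N and c = c and u = u and G = J] supp by simp
  also have "norm \<dots> \<le> (\<Sum>n<N. norm (u (Suc n)) * norm (J n - c * J (Suc n))) + norm (c * u 0 * J 0)"
    by (rule order_trans[OF norm_triangle_ineq4]) (auto intro: order_trans[OF norm_sum] simp: norm_mult)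
  also have "(\<Sum>n<N. norm (u (Suc n)) * norm (J n - c * J (Suc n)))
      \<le> (\<Sum>n<N. norm (u (Suc n)) * (p * norm (diff_op c v n) * (norm (v n) powr q + norm (v (Suc n)) powr q)))"
    unfolding J_def q(2)[symmetric] using norm_duality_map_diff_le[OF c q(1)]
    by (intro sum_mono mult_left_mono) auto
  also have "norm (c * u 0 * J 0) \<le> H powr p"
  proof -
    have "norm (c * u 0 * J 0) = norm (u 0) * norm (v 0) powr (1 + q)"
      using c by (simp add: J_def norm_mult norm_duality_map)
    also have "\<dots> \<le> H * H powr (1 + q)"
      using ub vb q H by (intro mult_mono powr_mono2) (auto simp: v_def)
    also have "\<dots> = H powr p" using H q by (simp add: powr_mult_base)
    finally show ?thesis .
  qed
  finally show ?thesis by (simp add: v_def q_def sum_distrib_left sum.distrib algebra_simps)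
qed

lemma sum_norm_diff_op_powr_le:
  fixes u :: "nat \<Rightarrow> complex" and c :: complex and p r1 r2 H :: real
  assumes c: "norm c = 1" and supp: "\<And>n. n \<ge> N \<Longrightarrow> u n = 0"
    and ub: "\<And>n. norm (u n) \<le> H" and vb: "\<And>n. norm (diff_op c u n) \<le> H"
    and p: "p > 2" and r: "r1 > 0" "r2 > 0" "1/r1 + 1/r2 = 2/p"
  shows "(\<Sum>n<N. norm (diff_op c u n) powr p) \<le> H powr p + 2 * p * lp_norm_upto N r1 u
     * lp_norm_upto N r2 (diff_op c (diff_op c u)) * lp_norm_upto N p (diff_op c u) powr (p - 2)"
proof -
  define q where "q = p - 2"
  have q: "q > 0" using p by (simp add: q_def)
  have vanish: "diff_op c u n = 0" if "n \<ge> N" for n using supp that by (simp add: diff_op_def)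
  have "1/r1 + 1/r2 + q/p = 1" using r(3) p by (simp add: q_def diff_divide_distrib)
  then have "(\<Sum>n<N. norm (u (n + 1)) * norm (diff_op c (diff_op c u) n) * norm (diff_op c u (n + s)) powr q)
      \<le> (\<Sum>n<N. norm (u n) powr (1 / (1/r1))) powr (1/r1)
        * (\<Sum>n<N. norm (diff_op c (diff_op c u) n) powr (1 / (1/r2))) powr (1/r2)
        * (\<Sum>n<N. (norm (diff_op c u n) powr q) powr (1 / (q/p))) powr (q/p)" for s
    using supp vanish r q p
    by (intro Holder_inequality_sum3_shifted[where x = "\<lambda>n. norm (u n)" and z = "\<lambda>n. norm (diff_op c u n) powr q"])
      auto
  also have "(\<Sum>n<N. (norm (diff_op c u n) powr q) powr (1 / (q/p))) powr (q/p)
      = lp_norm_upto N p (diff_op c u) powr q"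
    using q p by (simp add: lp_norm_upto_def powr_powr)
  finally have holder: "(\<Sum>n<N. norm (u (n + 1)) * norm (diff_op c (diff_op c u) n) * norm (diff_op c u (n + s)) powr q)
      \<le> lp_norm_upto N r1 u * lp_norm_upto N r2 (diff_op c (diff_op c u)) * lp_norm_upto N p (diff_op c u) powr q"
    for s by (simp add: lp_norm_upto_def)
  have "p * ((\<Sum>n<N. norm (u (n + 1)) * norm (diff_op c (diff_op c u) n) * norm (diff_op c u (n + 0)) powr q)
          + (\<Sum>n<N. norm (u (n + 1)) * norm (diff_op c (diff_op c u) n) * norm (diff_op c u (n + 1)) powr q))
      \<le> p * (2 * (lp_norm_upto N r1 u * lp_norm_upto N r2 (diff_op c (diff_op c u))
          * lp_norm_upto N p (diff_op c u) powr q))"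
    using p holder[of 0] holder[of 1] by (intro mult_left_mono) auto
  then show ?thesis
    using sum_norm_diff_op_powr_le_by_parts[where N = N, OF c supp ub vb p] unfolding q_def by linarith
qed

lemma max_one_lp_norm_upto_diff_op_sq_le:
  fixes u :: "nat \<Rightarrow> complex" and c :: complex and p r1 r2 H m :: real
  assumes c: "norm c = 1" and supp: "\<And>n. n \<ge> N \<Longrightarrow> u n = 0"
    and ub: "\<And>n. norm (u n) \<le> H" and vb: "\<And>n. norm (diff_op c u n) \<le> H" and H: "H \<ge> 1"
    and p: "p > 2" "p \<le> m" and r: "r1 > 0" "r2 > 0" "1/r1 + 1/r2 = 2/p"
  shows "(max 1 (lp_norm_upto N p (diff_op c u)))^2 \<le> (H powr m + 2 * m)
     * max 1 (lp_norm_upto N r1 u) * max 1 (lp_norm_upto N r2 (diff_op c (diff_op c u)))"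
proof (rule max_one_sq_le_of_powr_le[OF p(1)])
  have "lp_norm_upto N p (diff_op c u) powr p \<le> H powr p + 2 * p * lp_norm_upto N r1 u
     * lp_norm_upto N r2 (diff_op c (diff_op c u)) * lp_norm_upto N p (diff_op c u) powr (p - 2)"
    using sum_norm_diff_op_powr_le[where N = N, OF c supp ub vb p(1) r] p by (simp add: lp_norm_upto_powr)
  also have "\<dots> \<le> H powr m + 2 * m * lp_norm_upto N r1 u
     * lp_norm_upto N r2 (diff_op c (diff_op c u)) * lp_norm_upto N p (diff_op c u) powr (p - 2)"
  proof (rule add_mono)
    show "H powr p \<le> H powr m" using H p by (intro powr_mono) auto
    have "0 \<le> lp_norm_upto N r1 u * (lp_norm_upto N r2 (diff_op c (diff_op c u)) * lp_norm_upto N p (diff_op c u) powr (p - 2))"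
      by (simp add: lp_norm_upto_nonneg)
    then show "2 * p * lp_norm_upto N r1 u * lp_norm_upto N r2 (diff_op c (diff_op c u)) * lp_norm_upto N p (diff_op c u) powr (p - 2)
      \<le> 2 * m * lp_norm_upto N r1 u * lp_norm_upto N r2 (diff_op c (diff_op c u)) * lp_norm_upto N p (diff_op c u) powr (p - 2)"
      using p mult_right_mono[OF p(2)] by (simp add: mult.assoc)
  qed
  finally show "lp_norm_upto N p (diff_op c u) powr p \<le> H powr m + 2 * m * lp_norm_upto N r1 u
     * lp_norm_upto N r2 (diff_op c (diff_op c u)) * lp_norm_upto N p (diff_op c u) powr (p - 2)" .
  show "1 \<le> H powr m + 2 * m" using p powr_ge_zero[of H m] by linarith
qed (use p in \<open>auto simp: lp_norm_upto_nonneg\<close>)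

lemma powr_le_max_one:
  fixes y e :: real
  assumes "y \<ge> 0" "0 \<le> e" "e \<le> 1"
  shows "y powr e \<le> max 1 y"
proof (cases "y \<le> 1")
  case True
  then have "y powr e \<le> 1 powr e" using assms by (intro powr_mono2) auto
  then show ?thesis by simp
next
  case False
  then have "y powr e \<le> y powr 1" using assms by (intro powr_mono) auto
  then show ?thesis using assms by simp
qed

text \<open>The constant \<open>H^m + 2m\<close> of the step inequality, with \<open>m = 2d + 2\<close> and the bound
  \<open>H = 2^d\<close> on \<open>|\<Delta>\<^sup>iu|\<close> for \<open>i \<le> d\<close>.\<close>

definition interpolation_const :: "nat \<Rightarrow> real" where
  "interpolation_const d = (2^d) powr real (2*d+2) + 2 * real (2*d+2)"

lemma max_one_lp_norm_upto_diff_op_pow_sq_le: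
  fixes c :: complex and u :: "nat \<Rightarrow> complex" and d :: nat
  defines "p \<equiv> \<lambda>i. real (2*d+2) / real (i+1)"
  assumes c: "norm c = 1" and ub: "\<And>n. norm (u n) \<le> 1" and supp: "\<And>n. n \<ge> N \<Longrightarrow> u n = 0"
    and i: "0 < i" "i < d"
  shows "(max 1 (lp_norm_upto N (p i) ((diff_op c ^^ i) u)))^2 \<le> interpolation_const d
    * max 1 (lp_norm_upto N (p (i - 1)) ((diff_op c ^^ (i - 1)) u))
    * max 1 (lp_norm_upto N (p (i + 1)) ((diff_op c ^^ (i + 1)) u))"
proof -
  define m where "m = real (2*d+2)"
  define v where "v = (diff_op c ^^ (i - 1)) u"
  define H :: real where "H = 2^d"
  have H: "H \<ge> 1" unfolding H_def by simp
  have p_pos: "p j > 0" for j unfolding p_def by simp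
  have p_gt_2: "p i > 2" and p_le: "p i \<le> m" unfolding p_def m_def using i by (simp_all add: field_simps)
  have p_m: "p j = m / real (j + 1)" for j unfolding p_def m_def by simp
  have m_pos: "m > 0" unfolding m_def by simp
  have r: "1 / p (i - 1) + 1 / p (i + 1) = 2 / p i"
    unfolding p_m using i by (simp add: of_nat_diff add_divide_distrib[symmetric])
  have "(diff_op c ^^ i) u = diff_op c v" unfolding v_def using i by (cases i) simp_all
  then have v_Suc: "(diff_op c ^^ i) u = diff_op c v" "(diff_op c ^^ (i + 1)) u = diff_op c (diff_op c v)"
    by simp_all
  have bound: "norm ((diff_op c ^^ j) u n) \<le> H" if "j \<le> d" for j n
  proof -
    have "norm ((diff_op c ^^ j) u n) \<le> 2^j" by (rule norm_diff_op_pow_le[OF c ub])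
    also have "(2::real)^j \<le> 2^d" using that by (intro power_increasing) auto
    finally show ?thesis by (simp add: H_def)
  qed
  have "(max 1 (lp_norm_upto N (p i) (diff_op c v)))^2
      \<le> (H powr m + 2 * m) * max 1 (lp_norm_upto N (p (i - 1)) v)
        * max 1 (lp_norm_upto N (p (i + 1)) (diff_op c (diff_op c v)))"
  proof (rule max_one_lp_norm_upto_diff_op_sq_le[OF c _ _ _ H p_gt_2 p_le p_pos p_pos r])
    show "v n = 0" if "n \<ge> N" for n unfolding v_def using supp that by (rule diff_op_pow_eq_0_beyond)
    show "norm (v n) \<le> H" for n unfolding v_def using bound i by simp
    show "norm (diff_op c v n) \<le> H" for n unfolding v_Suc(1)[symmetric] using bound i by simp
  qed
  then show ?thesis unfolding v_Suc v_def by (simp add: interpolation_const_def H_def m_def)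
qed

text \<open>With \<open>p\<^sub>i = (2d+2)/(i+1)\<close> the previous lemma makes \<open>max 1 \<parallel>\<Delta>\<^sup>iu\<parallel>\<close> (in \<open>\<ell>^p\<^sub>i\<close>)
  log-convex in \<open>i\<close> up to a constant factor; it is therefore controlled by its values at
  \<open>i = 0\<close> and \<open>i = d\<close>, uniformly in \<open>N\<close>.\<close>

lemma sum_norm_diff_op_pow_powr_le_finite:
  fixes c :: complex and u :: "nat \<Rightarrow> complex" and A :: real
  assumes c: "norm c = 1" and d: "d \<ge> 1"
    and ub: "\<And>n. norm (u n) \<le> 1" and supp: "\<And>n. n \<ge> N \<Longrightarrow> u n = 0" and A: "A \<ge> 0"
    and end_0: "(\<Sum>n<N. norm (u n) powr real (2*d+2)) \<le> A"
    and end_d: "(\<Sum>n<N. norm ((diff_op c ^^ d) u n) ^ 2) \<le> A"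
    and j: "j \<le> d"
  shows "(\<Sum>n<N. norm ((diff_op c ^^ j) u n) powr (real (2*d+2) / real (j+1)))
          \<le> ((1 + A)^2 * interpolation_const d ^ (d*d)) powr real (2*d+2)"
proof -
  define m where "m = real (2*d+2)"
  define p where "p i = m / real (i+1)" for i
  define P where "P i = max 1 (lp_norm_upto N (p i) ((diff_op c ^^ i) u))" for i
  define K where "K = interpolation_const d"
  have p_pos: "p i > 0" and p_le: "p i \<le> m" for i unfolding p_def m_def by (auto simp: field_simps)
  have ends: "P i \<le> 1 + A" if "i = 0 \<or> i = d" for i
  proof -
    have "p 0 = real (2*d+2)" "p d = 2" unfolding p_def m_def by (simp_all add: field_simps)
    then have "(\<Sum>n<N. norm ((diff_op c ^^ i) u n) powr p i) \<le> A" using that end_0 end_d by auto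
    moreover have "lp_norm_upto N (p i) ((diff_op c ^^ i) u) \<le> max 1 (\<Sum>n<N. norm ((diff_op c ^^ i) u n) powr p i)"
      unfolding lp_norm_upto_def using p_pos[of i] that d
      by (intro powr_le_max_one) (auto simp: p_def m_def sum_nonneg)
    ultimately show ?thesis unfolding P_def using A by auto
  qed
  have K: "K \<ge> 1" unfolding K_def interpolation_const_def by (simp add: add_increasing)
  have step: "(P i)^2 \<le> K * P (i - 1) * P (i + 1)" if "0 < i" "i < d" for i
    using max_one_lp_norm_upto_diff_op_pow_sq_le[where N = N and u = u, OF c ub supp that]
    by (simp add: P_def p_def m_def K_def)
  have "P j \<le> (1 + A)^2 * K^(d*d)"
    by (rule quasi_log_convex_bound[OF _ K step ends[OF disjI1[OF refl]] ends[OF disjI2[OF refl]] j])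
      (simp add: P_def)
  then have bound: "lp_norm_upto N (p j) ((diff_op c ^^ j) u) \<le> (1 + A)^2 * K^(d*d)" unfolding P_def by simp
  have "1 * 1 \<le> (1 + A)^2 * K^(d*d)" using A K by (intro mult_mono one_le_power) auto
  then have "lp_norm_upto N (p j) ((diff_op c ^^ j) u) powr p j \<le> ((1 + A)^2 * K^(d*d)) powr m"
    using bound p_pos p_le
    by (intro order_trans[OF powr_mono2 powr_mono]) (auto simp: less_imp_le lp_norm_upto_nonneg)
  then have "(\<Sum>n<N. norm ((diff_op c ^^ j) u n) powr p j) \<le> ((1 + A)^2 * K^(d*d)) powr m"
    by (simp only: lp_norm_upto_powr[OF p_pos])
  then show ?thesis unfolding p_def m_def K_def by simp
qed

text \<open>Truncating at \<open>M\<close> changes \<open>\<Delta>\<^sup>d\<alpha>\<close> only at the \<open>d\<close> points below \<open>M\<close>,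
  and there its square is at most \<open>4^d\<close>.\<close>

lemma sum_norm_sq_diff_op_pow_truncation_le:
  fixes c :: complex and \<alpha> :: "nat \<Rightarrow> complex"
  assumes c: "norm c = 1" and ub: "\<And>n. norm (\<alpha> n) \<le> 1"
    and sd: "summable (\<lambda>n. norm ((diff_op c ^^ d) \<alpha> n) ^ 2)"
  shows "(\<Sum>n<M. norm ((diff_op c ^^ d) (\<lambda>n. if n < M then \<alpha> n else 0) n) ^ 2)
     \<le> (\<Sum>n. norm ((diff_op c ^^ d) \<alpha> n) ^ 2) + real d * 4^d"
proof -
  define \<beta> where "\<beta> n = (if n < M then \<alpha> n else 0)" for n
  define g :: "nat \<Rightarrow> real" where "g n = (if M \<le> n + d then 4^d else 0)" for n
  have "norm ((diff_op c ^^ d) \<beta> n) ^ 2 \<le> norm ((diff_op c ^^ d) \<alpha> n) ^ 2 + g n" for n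
  proof (cases "n + d < M")
    case True
    then have "(diff_op c ^^ d) \<beta> n = (diff_op c ^^ d) \<alpha> n"
      by (intro diff_op_pow_cong) (auto simp: \<beta>_def)
    then show ?thesis by (simp add: g_def)
  next
    case False
    have "norm ((diff_op c ^^ d) \<beta> n) ^ 2 \<le> (2^d)^2"
      using ub by (intro power_mono norm_diff_op_pow_le[OF c]) (auto simp: \<beta>_def)
    also have "(2^d)^2 = ((2::real)^2)^d" by (simp only: power_mult[symmetric] mult.commute)
    finally show ?thesis using False by (simp add: g_def add_increasing)
  qed
  then have "(\<Sum>n<M. norm ((diff_op c ^^ d) \<beta> n) ^ 2)
      \<le> (\<Sum>n<M. norm ((diff_op c ^^ d) \<alpha> n) ^ 2) + (\<Sum>n<M. g n)"
    by (simp add: sum.distrib[symmetric] sum_mono)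
  also have "(\<Sum>n<M. norm ((diff_op c ^^ d) \<alpha> n) ^ 2) \<le> (\<Sum>n. norm ((diff_op c ^^ d) \<alpha> n) ^ 2)"
    by (rule sum_le_suminf[OF sd]) auto
  also have "(\<Sum>n<M. g n) \<le> real d * 4^d"
  proof -
    have "(\<Sum>n<M. g n) = (\<Sum>n\<in>{M - d..<M}. g n)" by (rule sum.mono_neutral_right) (auto simp: g_def)
    also have "\<dots> \<le> (\<Sum>n\<in>{M - d..<M}. (4::real)^d)" by (rule sum_mono) (simp add: g_def)
    also have "\<dots> \<le> real d * 4^d" by (simp add: mult_right_mono)
    finally show ?thesis .
  qed
  finally show ?thesis by (simp only: \<beta>_def[abs_def])
qed

lemma summable_norm_diff_op_pow_powr_interpolation:
  fixes c :: complex and \<alpha> :: "nat \<Rightarrow> complex"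
  assumes c: "norm c = 1" and d: "d \<ge> 1" and ub: "\<And>n. norm (\<alpha> n) \<le> 1"
    and s0: "summable (\<lambda>n. norm (\<alpha> n) ^ (2*d+2))"
    and sd: "summable (\<lambda>n. norm ((diff_op c ^^ d) \<alpha> n) ^ 2)"
    and j: "j \<le> d"
  shows "summable (\<lambda>n. norm ((diff_op c ^^ j) \<alpha> n) powr (real (2*d+2) / real (j+1)))"
proof (rule summableI_nonneg_bounded)
  define A where "A = (\<Sum>n. norm (\<alpha> n) ^ (2*d+2)) + (\<Sum>n. norm ((diff_op c ^^ d) \<alpha> n) ^ 2) + real d * 4^d"
  have suminf_nonneg': "(\<Sum>n. norm (\<alpha> n) ^ (2*d+2)) \<ge> 0" "(\<Sum>n. norm ((diff_op c ^^ d) \<alpha> n) ^ 2) \<ge> 0"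
    "0 \<le> real d * 4^d"
    using s0 sd by (auto intro: suminf_nonneg)
  then have A: "A \<ge> 0" unfolding A_def by simp
  have powr_eq: "norm z powr real (2*d+2) = norm z ^ (2*d+2)" for z :: complex
    by (rule powr_realpow') auto
  fix N
  define M where "M = N + j + 1"
  define \<beta> where "\<beta> n = (if n < M then \<alpha> n else 0)" for n
  have "(\<Sum>n<M. norm (\<beta> n) powr real (2*d+2)) \<le> (\<Sum>n. norm (\<alpha> n) ^ (2*d+2))"
    unfolding powr_eq using sum_le_suminf[OF s0, of "{..<M}"] by (simp add: \<beta>_def)
  then have end_0: "(\<Sum>n<M. norm (\<beta> n) powr real (2*d+2)) \<le> A"
    unfolding A_def using suminf_nonneg' by linarith
  have "(\<Sum>n<M. norm ((diff_op c ^^ d) \<beta> n) ^ 2) \<le> (\<Sum>n. norm ((diff_op c ^^ d) \<alpha> n) ^ 2) + real d * 4^d"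
    unfolding \<beta>_def by (rule sum_norm_sq_diff_op_pow_truncation_le[OF c ub sd])
  then have end_d: "(\<Sum>n<M. norm ((diff_op c ^^ d) \<beta> n) ^ 2) \<le> A"
    unfolding A_def using suminf_nonneg' by linarith
  have "(\<Sum>n<N. norm ((diff_op c ^^ j) \<alpha> n) powr (real (2*d+2) / real (j+1)))
      = (\<Sum>n<N. norm ((diff_op c ^^ j) \<beta> n) powr (real (2*d+2) / real (j+1)))"
    by (intro sum.cong refl arg_cong2[where f = "(powr)"] arg_cong[where f = norm] diff_op_pow_cong)
      (auto simp: \<beta>_def M_def)
  also have "\<dots> \<le> (\<Sum>n<M. norm ((diff_op c ^^ j) \<beta> n) powr (real (2*d+2) / real (j+1)))"
    by (rule sum_mono2) (auto simp: M_def)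
  also have "\<dots> \<le> ((1 + A)^2 * interpolation_const d ^ (d*d)) powr real (2*d+2)"
    using ub by (intro sum_norm_diff_op_pow_powr_le_finite[OF c d _ _ A end_0 end_d j]) (auto simp: \<beta>_def)
  finally show "(\<Sum>n<N. norm ((diff_op c ^^ j) \<alpha> n) powr (real (2*d+2) / real (j+1)))
      \<le> ((1 + A)^2 * interpolation_const d ^ (d*d)) powr real (2*d+2)" .
qed simp

lemma summable_norm_diff_op_pow_powr:
  fixes c :: complex and \<alpha> :: "nat \<Rightarrow> complex"
  assumes c: "norm c = 1" and d: "d \<ge> 1" and ub: "\<And>n. norm (\<alpha> n) \<le> 1"
    and s0: "summable (\<lambda>n. norm (\<alpha> n) ^ (2*d+2))"
    and sd: "summable (\<lambda>n. norm ((diff_op c ^^ d) \<alpha> n) ^ 2)"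
  shows "summable (\<lambda>n. norm ((diff_op c ^^ j) \<alpha> n) powr (real (2*d+2) / real (min j d + 1)))"
proof (cases "j \<le> d")
  case True
  then show ?thesis using summable_norm_diff_op_pow_powr_interpolation[OF c d ub s0 sd True] by simp
next
  case False
  have "(diff_op c ^^ j) \<alpha> = (diff_op c ^^ (j - d)) ((diff_op c ^^ d) \<alpha>)"
    using False funpow_add[of "j - d" d "diff_op c"] by simp
  moreover have "real (2*d+2) / real (min j d + 1) = 2" using False by (simp add: field_simps)
  ultimately show ?thesis using summable_norm_sq_diff_op_pow[OF sd, where c = c and j = "j - d"]
    by (simp only: powr_numeral norm_ge_zero)
qed

section \<open>Summability of the Taylor terms\<close>

lemma summable_prod_powr:
  fixes a :: "'i \<Rightarrow> nat \<Rightarrow> real"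
  assumes I: "finite I" and a: "\<And>i. i \<in> I \<Longrightarrow> summable (a i)" "\<And>i n. i \<in> I \<Longrightarrow> a i n \<ge> 0"
    and w: "\<And>i. i \<in> I \<Longrightarrow> w i > 0" and W: "(\<Sum>i\<in>I. w i) \<ge> 1"
  shows "summable (\<lambda>n. \<Prod>i\<in>I. a i n powr w i)"
proof -
  \<comment> \<open>Each factor is at most \<open>S^w\<^sub>i\<close> for \<open>S = \<Sum>\<^sub>i a\<^sub>i\<close>,
    and \<open>S^V \<le> B^(V-1) S\<close> for a bound \<open>B \<ge> 1\<close> of \<open>S\<close>.\<close>
  define S where "S n = (\<Sum>i\<in>I. a i n)" for n
  define V where "V = (\<Sum>i\<in>I. w i)"
  have "I \<noteq> {}" using W by auto
  have S: "summable S" unfolding S_def using a by (intro summable_sum) auto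
  have S_nonneg: "S n \<ge> 0" for n unfolding S_def using a by (intro sum_nonneg) auto
  have a_le_S: "a i n \<le> S n" if "i \<in> I" for i n
    unfolding S_def using I that a by (intro member_le_sum) auto
  obtain B where B: "B \<ge> 1" "\<And>n. S n \<le> B"
  proof -
    have "Bseq S" using summable_LIMSEQ_zero[OF S] by (intro convergent_imp_Bseq convergentI)
    then obtain K where "\<And>n. norm (S n) \<le> K" by (auto simp: Bseq_def)
    then have "S n \<le> max 1 K" for n using abs_ge_self[of "S n"] by (metis max.coboundedI2 order_trans real_norm_def)
    then show ?thesis by (intro that[of "max 1 K"]) auto
  qed
  have "norm (\<Prod>i\<in>I. a i n powr w i) \<le> B powr (V - 1) * S n" for n
  proof (cases "S n = 0")
    case True
    then have "a i n = 0" if "i \<in> I" for i using a_le_S[OF that, of n] a(2)[OF that, of n] by simp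
    moreover have "card I \<noteq> 0" using \<open>I \<noteq> {}\<close> I by simp
    ultimately show ?thesis using True by (simp add: zero_power)
  next
    case False
    then have S_pos: "S n > 0" using S_nonneg[of n] by simp
    have "norm (\<Prod>i\<in>I. a i n powr w i) = (\<Prod>i\<in>I. a i n powr w i)" by (simp add: prod_nonneg)
    also have "\<dots> \<le> (\<Prod>i\<in>I. S n powr w i)"
      using a a_le_S w by (intro prod_mono conjI powr_mono2) (auto intro: less_imp_le)
    also have "\<dots> = S n * S n powr (V - 1)"
      using S_pos I by (simp add: V_def powr_sum powr_mult_base)
    also have "\<dots> \<le> S n * B powr (V - 1)"
      using S_pos B W by (intro mult_left_mono powr_mono2) (auto simp: V_def)
    finally show ?thesis by (simp add: mult.commute)
  qed
  then show ?thesis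
    by (intro summable_comparison_test'[OF summable_mult[OF S, of "B powr (V - 1)"], where N = 0]) auto
qed

lemma summable_norm_prod_diff_op_pow:
  fixes \<alpha> :: "nat \<Rightarrow> complex" and r :: "nat \<Rightarrow> real"
  assumes r: "\<And>j. r j > 0" and s: "\<And>j. summable (\<lambda>n. norm ((diff_op c ^^ j) \<alpha> n) powr r j)"
    and W: "(\<Sum>p<k. 1 / r (bs ! p) + 1 / r (gs ! p)) \<ge> 1"
  shows "summable (\<lambda>n. norm (\<Prod>p<k. (diff_op c ^^ (bs ! p)) \<alpha> n * cnj ((diff_op c ^^ (gs ! p)) \<alpha> n)))"
proof -
  define e where "e pt = (if snd pt then bs ! fst pt else gs ! fst pt)" for pt :: "nat \<times> bool"
  define a where "a j n = norm ((diff_op c ^^ j) \<alpha> n) powr r j" for j n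
  have split: "(\<Sum>pt\<in>{..<k} \<times> UNIV. f pt) = (\<Sum>p<k. f (p, True) + f (p, False))"
    "(\<Prod>pt\<in>{..<k} \<times> UNIV. g pt) = (\<Prod>p<k. g (p, True) * g (p, False))"
    for f g :: "nat \<times> bool \<Rightarrow> real"
    by (simp_all add: sum.cartesian_product' prod.cartesian_product' UNIV_bool add.commute mult.commute)
  have "summable (\<lambda>n. \<Prod>pt\<in>{..<k} \<times> UNIV. a (e pt) n powr (1 / r (e pt)))"
    using r s W by (intro summable_prod_powr) (auto simp: a_def split e_def)
  moreover have "a j n powr (1 / r j) = norm ((diff_op c ^^ j) \<alpha> n)" for j n
    using r[of j] by (simp add: a_def powr_powr)
  ultimately show ?thesis by (simp add: split e_def prod_norm[symmetric] norm_mult)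
qed

lemma L2k_le:
  assumes "length b = k" "length g = k" "taylor_coeff \<theta> k C (b, g) \<noteq> 0"
  shows "L2k \<theta> d k C \<le> (\<Sum>p<k. min (b ! p) d + min (g ! p) d)"
proof -
  let ?S = "{(\<Sum>p<k. min (b ! p) d + min (g ! p) d) | b g.
       length b = k \<and> length g = k \<and> taylor_coeff \<theta> k C (b, g) \<noteq> 0}"
  have "(\<Sum>p<k. min (b ! p) d + min (g ! p) d) \<le> (\<Sum>p<k. d + d)" for b g :: "nat list"
    by (intro sum_mono add_mono) auto
  then have "?S \<subseteq> {..k * (d + d)}" by auto
  then have "finite ?S" by (rule finite_subset) simp
  then show ?thesis unfolding L2k_def using assms by (intro Min_le) auto
qed

lemma is_poly2k_exponents_bounded:
  assumes "is_poly2k k C"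
  obtains M where "\<forall>m\<in>poly_supp C. \<forall>p<k. fst m ! p \<le> M \<and> snd m ! p \<le> M"
proof -
  have "finite (\<Union>m\<in>poly_supp C. set (fst m) \<union> set (snd m))"
    using assms unfolding is_poly2k_def by auto
  then obtain M where M: "\<forall>x\<in>(\<Union>m\<in>poly_supp C. set (fst m) \<union> set (snd m)). x \<le> M"
    using finite_nat_set_iff_bounded_le by blast
  show ?thesis
  proof (rule that[of M], intro ballI allI impI)
    fix m p assume m: "m \<in> poly_supp C" and p: "p < k"
    then have "length (fst m) = k" "length (snd m) = k"
      using assms unfolding is_poly2k_def poly_supp_def by (cases m, simp)+
    then have "fst m ! p \<in> set (fst m)" "snd m ! p \<in> set (snd m)" using p by simp_all
    then show "fst m ! p \<le> M \<and> snd m ! p \<le> M" using M m by blast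
  qed
qed

text \<open>The degree condition \<open>L\<^sub>2\<^sub>k(F) \<ge> 2(d+1) - 2k\<close> says exactly that the exponents
  \<open>(2d+2)/(min(b\<^sub>p,d)+1)\<close> of the factors \<open>\<Delta>^b\<^sub>p \<alpha>\<close> of every surviving Taylor term have reciprocals
  summing to at least \<open>1\<close>.\<close>

lemma sum_inverse_exponents_ge_1:
  assumes L: "int L \<ge> 2 * (int d + 1) - 2 * int k" "L \<le> (\<Sum>p<k. min (b ! p) d + min (g ! p) d)"
  shows "(\<Sum>p<k. 1 / (real (2*d+2) / real (min (b ! p) d + 1))
                + 1 / (real (2*d+2) / real (min (g ! p) d + 1))) \<ge> 1"
proof -
  define m where "m = real (2*d+2)"
  have m: "m > 0" unfolding m_def by simp
  have "(\<Sum>p<k. (min (b ! p) d + 1) + (min (g ! p) d + 1))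
      = (\<Sum>p<k. min (b ! p) d + min (g ! p) d) + (\<Sum>p<k. 2)"
    by (simp only: sum.distrib[symmetric]) (rule sum.cong; simp)
  then have "2 * d + 2 \<le> (\<Sum>p<k. (min (b ! p) d + 1) + (min (g ! p) d + 1))"
    using L by simp
  then have "m \<le> real (\<Sum>p<k. (min (b ! p) d + 1) + (min (g ! p) d + 1))"
    unfolding m_def by (simp only: of_nat_le_iff)
  also have "\<dots> = (\<Sum>p<k. 1 / (m / real (min (b ! p) d + 1)) + 1 / (m / real (min (g ! p) d + 1))) * m"
    unfolding sum_distrib_right of_nat_sum using m by (intro sum.cong refl) (simp add: field_simps)
  finally show ?thesis using m unfolding m_def by simp
qed

lemma summable_norm_taylor_term:
  fixes \<alpha> :: "nat \<Rightarrow> complex"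
  assumes sj: "\<And>j. summable (\<lambda>n. norm ((diff_op c ^^ j) \<alpha> n) powr (real (2*d+2) / real (min j d + 1)))"
    and L: "int (L2k \<theta> d k C) \<ge> 2 * (int d + 1) - 2 * int k"
    and len: "length b = k" "length g = k"
  shows "summable (\<lambda>n. norm (taylor_coeff \<theta> k C (b, g)
      * (\<Prod>p<k. (diff_op c ^^ (b ! p)) \<alpha> n * cnj ((diff_op c ^^ (g ! p)) \<alpha> n))))"
proof (cases "taylor_coeff \<theta> k C (b, g) = 0")
  case False
  have "(\<Sum>p<k. 1 / (real (2*d+2) / real (min (b ! p) d + 1))
      + 1 / (real (2*d+2) / real (min (g ! p) d + 1))) \<ge> 1"
    by (rule sum_inverse_exponents_ge_1[OF L L2k_le[OF len False]])
  then have "summable (\<lambda>n. norm (\<Prod>p<k. (diff_op c ^^ (b ! p)) \<alpha> n * cnj ((diff_op c ^^ (g ! p)) \<alpha> n)))"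
    using sj by (intro summable_norm_prod_diff_op_pow[where r = "\<lambda>j. real (2*d+2) / real (min j d + 1)"]) auto
  then show ?thesis by (simp add: norm_mult summable_mult)
qed simp

theorem lemma15:
  fixes \<theta>1 :: real and d k :: nat and \<alpha> :: "nat \<Rightarrow> complex"
    and C :: "nat list \<times> nat list \<Rightarrow> complex"
  assumes "0 \<le> \<theta>1" "\<theta>1 < 2 * pi" "d \<ge> 1" "k \<ge> 1"
    and "\<forall>n. norm (\<alpha> n) < 1"
    and "in_lp 2 (shift_minus_pow (exp (- \<i> * \<theta>1)) d \<alpha>)"
    and "in_lp (2 * d + 2) \<alpha>"
    and "is_poly2k k C" and "poly_supp C \<noteq> {}"
    and "int (L2k \<theta>1 d k C) \<ge> 2 * (int d + 1) - 2 * int k"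
  shows "\<exists>B. \<forall>N. norm (\<Sum>n\<le>N. phi2k k \<alpha> C n) \<le> B"
proof -
  define c where "c = exp (- \<i> * complex_of_real \<theta>1)"
  have c: "norm c = 1" unfolding c_def by (simp add: norm_exp_eq_Re)
  have sj: "summable (\<lambda>n. norm ((diff_op c ^^ j) \<alpha> n) powr (real (2*d+2) / real (min j d + 1)))" for j
    using assms(3,5,6,7)
    by (intro summable_norm_diff_op_pow_powr[OF c])
      (auto simp: in_lp_def c_def shift_minus_pow_eq_diff_op_pow less_imp_le)
  obtain M where M: "\<forall>m\<in>poly_supp C. \<forall>p<k. fst m ! p \<le> M \<and> snd m ! p \<le> M"
    using is_poly2k_exponents_bounded[OF assms(8)] by blast
  define F where "F bg n = taylor_coeff \<theta>1 k C bg
      * (\<Prod>p<k. (diff_op c ^^ (fst bg ! p)) \<alpha> n * cnj ((diff_op c ^^ (snd bg ! p)) \<alpha> n))" for bg n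
  define T where "T = bounded_lists M k \<times> bounded_lists M k"
  have "summable (\<lambda>n. norm (F bg n))" if "bg \<in> T" for bg
    using that summable_norm_taylor_term[OF sj assms(10)]
    by (cases bg) (auto simp: F_def T_def bounded_lists_def)
  then have F_sum: "summable (\<lambda>n. \<Sum>bg\<in>T. norm (F bg n))" by (rule summable_sum)
  have "phi2k k \<alpha> C n = (\<Sum>bg\<in>T. F bg n)" for n
    unfolding F_def T_def c_def by (rule phi2k_eq_taylor_sum[OF M])
  then have "norm (norm (phi2k k \<alpha> C n)) \<le> (\<Sum>bg\<in>T. norm (F bg n))" for n
    by (simp add: norm_sum)
  then have "summable (\<lambda>n. norm (phi2k k \<alpha> C n))"
    by (rule summable_comparison_test'[OF F_sum, where N = 0])
  then have "norm (\<Sum>n\<le>N. phi2k k \<alpha> C n) \<le> (\<Sum>n. norm (phi2k k \<alpha> C n))" for N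
    by (intro order_trans[OF norm_sum] sum_le_suminf) auto
  then show ?thesis by blast
qed
end
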